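(* Let $k$ be a field containing all $m$-th roots of unity, with $p\nmid m$ if $\operatorname{char}(k)=p>0$. Let $\mathcal A$ be a perfect $k$-algebra, $S$ a commutative associative unital $k$-algebra, $\sigma_1\in\operatorname{Aut}(\mathcal A)$, $\sigma_2\in\operatorname{Aut}(S)$ with $\sigma_1^m=\mathrm{id}$, $\sigma_2^m=\mathrm{id}$; assume $S_{\bar 1}$ contains an invertible element $u$ of $S$, and that $\psi:C(\mathcal A)\otimes S\to C(\mathcal A\otimes S)$, $\gamma\otimes s\mapsto\gamma\otimes L_s$, is an isomorphism. Then the restriction map $\pi:\mathcal D(\mathcal A\otimes S)_{\bar 0}\to\mathcal D((\mathcal A\otimes S)_{\bar 0})$, $D\mapsto D|_{(\mathcal A\otimes S)_{\bar 0}}$, is surjective.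
   Context: Algebras are $k$-vector spaces with bilinear product (not necessarily associative); perfect means $\mathcal A\mathcal A=\mathcal A$; $C(\mathcal A)$ is the centroid $\{\gamma\in\operatorname{End}(\mathcal A)\mid\gamma(xy)=\gamma(x)y=x\gamma(y)\}$; $\mathcal D$ denotes derivations; $L_s$ is left multiplication. Fix a primitive $m$-th root of unity $\omega$; $\mathcal A_{\bar i}=\{a\mid\sigma_1(a)=\omega^ia\}$, $S_{\bar i}=\{s\mid\sigma_2(s)=\omega^is\}$, $(\mathcal A\otimes S)_{\bar i}=\sum_{\bar j}\mathcal A_{\bar i-\bar j}\otimes S_{\bar j}$; $(\mathcal A\otimes S)_{\bar 0}$ is the fixed-point subalgebra of $\sigma_1\otimes\sigma_2$; $\mathcal D(\mathcal A\otimes S)_{\bar 0}$ is the set of derivations of $\mathcal A\otimes S$ mapping each $(\mathcal A\otimes S)_{\bar j}$ into itself. *)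

theory Defs
  imports Complex_Main "HOL-Library.Function_Algebras"
begin

definition k_algebra :: "('k::field \<Rightarrow> 'a::ab_group_add \<Rightarrow> 'a) \<Rightarrow> ('a \<Rightarrow> 'a \<Rightarrow> 'a) \<Rightarrow> bool" where
  "k_algebra sc mul \<longleftrightarrow> Vector_Spaces.vector_space sc \<and>
     (\<forall>x y z. mul (x + y) z = mul x z + mul y z) \<and>
     (\<forall>x y z. mul x (y + z) = mul x y + mul x z) \<and>
     (\<forall>c x y. mul (sc c x) y = sc c (mul x y)) \<and>
     (\<forall>c x y. mul x (sc c y) = sc c (mul x y))"

definition perfect :: "('k::field \<Rightarrow> 'a::ab_group_add \<Rightarrow> 'a) \<Rightarrow> ('a \<Rightarrow> 'a \<Rightarrow> 'a) \<Rightarrow> bool" where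
  "perfect sc mul \<longleftrightarrow> module.span sc {mul x y | x y. True} = UNIV"

definition comm_unital_k_algebra :: "('k::field \<Rightarrow> 's::comm_ring_1 \<Rightarrow> 's) \<Rightarrow> bool" where
  "comm_unital_k_algebra sc \<longleftrightarrow> Vector_Spaces.vector_space sc \<and> (\<forall>c x y. sc c (x * y) = sc c x * y)"

definition alg_aut :: "('k::field \<Rightarrow> 'a::ab_group_add \<Rightarrow> 'a) \<Rightarrow> ('a \<Rightarrow> 'a \<Rightarrow> 'a) \<Rightarrow> ('a \<Rightarrow> 'a) \<Rightarrow> bool" where
  "alg_aut sc mul f \<longleftrightarrow> Vector_Spaces.linear sc sc f \<and> bij f \<and> (\<forall>x y. f (mul x y) = mul (f x) (f y))"

definition centroid :: "('k::field \<Rightarrow> 'a::ab_group_add \<Rightarrow> 'a) \<Rightarrow> ('a \<Rightarrow> 'a \<Rightarrow> 'a) \<Rightarrow> ('a \<Rightarrow> 'a) set" where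
  "centroid sc mul = {g. Vector_Spaces.linear sc sc g \<and> (\<forall>x y. g (mul x y) = mul (g x) y \<and> g (mul x y) = mul x (g y))}"

definition derivations :: "('k::field \<Rightarrow> 'a::ab_group_add \<Rightarrow> 'a) \<Rightarrow> ('a \<Rightarrow> 'a \<Rightarrow> 'a) \<Rightarrow> ('a \<Rightarrow> 'a) set" where
  "derivations sc mul = {D. Vector_Spaces.linear sc sc D \<and> (\<forall>x y. D (mul x y) = mul (D x) y + mul x (D y))}"

text \<open>Derivations of a subalgebra with carrier B: k-linear maps B \<rightarrow> B satisfying
  the Leibniz rule on B (values outside B are irrelevant).\<close>
definition derivations_on :: "('k::field \<Rightarrow> 'a::ab_group_add \<Rightarrow> 'a) \<Rightarrow> ('a \<Rightarrow> 'a \<Rightarrow> 'a) \<Rightarrow> 'a set \<Rightarrow> ('a \<Rightarrow> 'a) set" where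
  "derivations_on sc mul B = {d. (\<forall>x\<in>B. d x \<in> B) \<and>
      (\<forall>x\<in>B. \<forall>y\<in>B. d (x + y) = d x + d y) \<and>
      (\<forall>c. \<forall>x\<in>B. d (sc c x) = sc c (d x)) \<and>
      (\<forall>x\<in>B. \<forall>y\<in>B. d (mul x y) = mul (d x) y + mul x (d y))}"

text \<open>@ is avoided. is_tensor scA V scS scT tens: the type 't with scalar multiplication
  scT, together with the map tens, is the tensor product V \<otimes>_k S of the subspace V
  (of the k-space 'a) with the k-space 's, i.e. tens is k-bilinear on V \<times> S, the pure
  tensors span 't, and the induced map V \<otimes> S \<rightarrow> 't is injective, expressed as:
  for finitely many linearly independent s_j in S and v_j in V,
  sum_j v_j \<otimes> s_j = 0 implies all v_j = 0.  This characterises the tensor product up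
  to unique isomorphism.\<close>
definition is_tensor ::
  "('k::field \<Rightarrow> 'a::ab_group_add \<Rightarrow> 'a) \<Rightarrow> 'a set \<Rightarrow> ('k \<Rightarrow> 's::ab_group_add \<Rightarrow> 's)
   \<Rightarrow> ('k \<Rightarrow> 't::ab_group_add \<Rightarrow> 't) \<Rightarrow> ('a \<Rightarrow> 's \<Rightarrow> 't) \<Rightarrow> bool" where
  "is_tensor scA V scS scT tens \<longleftrightarrow>
     Vector_Spaces.vector_space scT \<and> module.subspace scA V \<and>
     (\<forall>x\<in>V. \<forall>y\<in>V. \<forall>s. tens (x + y) s = tens x s + tens y s) \<and>
     (\<forall>c. \<forall>x\<in>V. \<forall>s. tens (scA c x) s = scT c (tens x s)) \<and>
     (\<forall>x\<in>V. \<forall>s t. tens x (s + t) = tens x s + tens x t) \<and>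
     (\<forall>c. \<forall>x\<in>V. \<forall>s. tens x (scS c s) = scT c (tens x s)) \<and>
     module.span scT {tens x s | x s. x \<in> V} = UNIV \<and>
     (\<forall>F f. finite F \<and> \<not> module.dependent scS F \<and> f ` F \<subseteq> V \<and>
            (\<Sum>s\<in>F. tens (f s) s) = 0 \<longrightarrow> (\<forall>s\<in>F. f s = 0))"

definition is_tensor_algebra ::
  "('k::field \<Rightarrow> 'a::ab_group_add \<Rightarrow> 'a) \<Rightarrow> ('a \<Rightarrow> 'a \<Rightarrow> 'a) \<Rightarrow> ('k \<Rightarrow> 's::comm_ring_1 \<Rightarrow> 's)
   \<Rightarrow> ('k \<Rightarrow> 't::ab_group_add \<Rightarrow> 't) \<Rightarrow> ('t \<Rightarrow> 't \<Rightarrow> 't) \<Rightarrow> ('a \<Rightarrow> 's \<Rightarrow> 't) \<Rightarrow> bool" where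
  "is_tensor_algebra scA mulA scS scT mulT tens \<longleftrightarrow>
     is_tensor scA UNIV scS scT tens \<and> k_algebra scT mulT \<and>
     (\<forall>a s b t. mulT (tens a s) (tens b t) = tens (mulA a b) (s * t))"

definition eigcomp :: "('k::field \<Rightarrow> 'a \<Rightarrow> 'a) \<Rightarrow> ('a \<Rightarrow> 'a) \<Rightarrow> 'k \<Rightarrow> nat \<Rightarrow> 'a set" where
  "eigcomp sc \<sigma> \<omega> i = {a. \<sigma> a = sc (\<omega> ^ i) a}"

text \<open>(A \<otimes> S)_i = sum over j in Z/m of A_{i-j} \<otimes> S_j (indices taken mod m).\<close>
definition tensor_comp ::
  "('k::field \<Rightarrow> 'a \<Rightarrow> 'a) \<Rightarrow> ('a \<Rightarrow> 'a) \<Rightarrow> ('k \<Rightarrow> 's \<Rightarrow> 's) \<Rightarrow> ('s \<Rightarrow> 's)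
   \<Rightarrow> ('k \<Rightarrow> 't::ab_group_add \<Rightarrow> 't) \<Rightarrow> ('a \<Rightarrow> 's \<Rightarrow> 't) \<Rightarrow> 'k \<Rightarrow> nat \<Rightarrow> nat \<Rightarrow> 't set" where
  "tensor_comp scA \<sigma>1 scS \<sigma>2 scT tens \<omega> m i =
     module.span scT {tens a s | a s j. j < m \<and> a \<in> eigcomp scA \<sigma>1 \<omega> ((i + m - j) mod m)
                                        \<and> s \<in> eigcomp scS \<sigma>2 \<omega> j}"

end

theory Submission
  imports Defs
begin

(* Let T = A (x) S, graded by the eigenvalues omega^j of sigma = sigma1 (x) sigma2, so that
   (A (x) S)_j is the eigenspace T_j. Multiplication by the invertible u in S_1 is a centroidal
   map U with inverse V and U(T_j) = T_(j+1); hence every element of T_n is U^n z with z in T_0.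
   Extending d by D(U^n z) = U^n (d z) is consistent only up to the defect
   delta = V^m d U^m - d, which is centroidal on products in T_0. Spreading the defect evenly,
   D(U^n z) = U^n (d z + (n/m) delta z) for 0 <= n < m, gives a derivation: when i + j >= m the
   product of elements of degrees i and j passes once through U^m, picking up one extra defect,
   and i/m + j/m = 1 + (i + j - m)/m accounts for exactly that. *)

section \<open>Eigenspace decomposition of an operator of finite order\<close>

lemma sum_powers_root_of_unity:
  fixes z :: "'k::field"
  assumes "z ^ m = 1"
  shows "(\<Sum>k<m. z ^ k) = (if z = 1 then of_nat m else 0)"
  using assms by (simp add: sum_gp_strict)

lemma (in vector_space) linear_funpow:
  "Vector_Spaces.linear scale scale (f ^^ k)" if "Vector_Spaces.linear scale scale f"
proof (induction k)
  case 0
  show ?case using linear_id by (simp add: id_def)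
next
  case (Suc k)
  show ?case using Vector_Spaces.linear_compose[OF Suc that] by (simp add: o_def)
qed

locale cyclic_operator = vector_space sc
  for sc :: "'k::field \<Rightarrow> 'b::ab_group_add \<Rightarrow> 'b" +
  fixes \<sigma> :: "'b \<Rightarrow> 'b" and \<omega> :: 'k and m :: nat
  assumes linear_\<sigma>: "Vector_Spaces.linear sc sc \<sigma>"
    and \<sigma>_order: "\<sigma> ^^ m = id"
    and order_nonzero: "of_nat m \<noteq> (0::'k)"
    and root: "\<omega> ^ m = 1"
    and primitive: "\<forall>j. 0 < j \<and> j < m \<longrightarrow> \<omega> ^ j \<noteq> 1"
begin

sublocale endo: vector_space_pair sc sc ..

abbreviation Eig :: "nat \<Rightarrow> 'b set" where
  "Eig j \<equiv> eigcomp sc \<sigma> \<omega> j"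

lemma order_pos: "0 < m"
  using order_nonzero by (rule contrapos_np) simp

lemma omega_nonzero: "\<omega> \<noteq> 0"
  using root order_pos by (metis power_0_left zero_neq_one gr_implies_not0)

lemma omega_pow_mod: "\<omega> ^ e = \<omega> ^ (e mod m)"
proof -
  have "\<omega> ^ e = \<omega> ^ (m * (e div m) + e mod m)"
    by simp
  also have "\<dots> = \<omega> ^ (e mod m)"
    by (simp only: power_add power_mult root power_one mult_1_left)
  finally show ?thesis .
qed

lemma omega_pow_inj:
  assumes "i \<le> j" "j < m" "\<omega> ^ i = \<omega> ^ j"
  shows "i = j"
proof (rule ccontr)
  assume "i \<noteq> j"
  then have "0 < j - i" "j - i < m"
    using assms(1,2) by auto
  moreover have "\<omega> ^ i * \<omega> ^ (j - i) = \<omega> ^ j"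
    using assms(1) by (simp flip: power_add)
  then have "\<omega> ^ (j - i) = 1"
    using assms(3) omega_nonzero by simp
  ultimately show False
    using primitive by blast
qed

lemma omega_pow_eq_iff: "\<omega> ^ a = \<omega> ^ b \<longleftrightarrow> a mod m = b mod m"
proof
  assume "\<omega> ^ a = \<omega> ^ b"
  then have "\<omega> ^ (a mod m) = \<omega> ^ (b mod m)"
    by (simp flip: omega_pow_mod)
  then show "a mod m = b mod m"
    using omega_pow_inj[of "a mod m" "b mod m"] omega_pow_inj[of "b mod m" "a mod m"] order_pos
    by (cases "a mod m \<le> b mod m") auto
next
  assume "a mod m = b mod m"
  then show "\<omega> ^ a = \<omega> ^ b"
    by (metis omega_pow_mod)
qed

lemma power_omega_pow_order: "(\<omega> ^ a) ^ m = 1"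
  by (metis power_mult mult.commute root power_one)

lemma subspace_Eig: "subspace (Eig j)"
  using linear_\<sigma> unfolding subspace_def eigcomp_def
  by (auto simp: endo.linear_0 endo.linear_add endo.linear_scale scale_right_distrib mult.commute)

lemma Eig_mod: "Eig (j mod m) = Eig j"
  unfolding eigcomp_def by (simp flip: omega_pow_mod)

lemma funpow_eigenvector: "\<sigma> x = sc c x \<Longrightarrow> (\<sigma> ^^ k) x = sc (c ^ k) x"
  by (induction k) (simp_all add: endo.linear_scale[OF linear_\<sigma>] mult.commute)

definition eigenproj :: "nat \<Rightarrow> 'b \<Rightarrow> 'b" where
  "eigenproj n x = sc (inverse (of_nat m)) (\<Sum>k<m. sc (inverse \<omega> ^ (n * k)) ((\<sigma> ^^ k) x))"

lemma linear_eigenproj: "Vector_Spaces.linear sc sc (eigenproj n)"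
proof -
  have "Vector_Spaces.linear sc sc (\<lambda>x. sc (inverse \<omega> ^ (n * k)) ((\<sigma> ^^ k) x))" for k
    by (rule endo.linear_compose_scale_right[OF linear_funpow[OF linear_\<sigma>]])
  then show ?thesis
    unfolding eigenproj_def
    by (intro endo.linear_compose_scale_right endo.linear_compose_sum) auto
qed

lemma eigenproj_Eig:
  assumes "x \<in> Eig i" "n < m"
  shows "eigenproj n x = (if i mod m = n then x else 0)"
proof -
  define z where "z = inverse \<omega> ^ n * \<omega> ^ i"
  have "sc (inverse \<omega> ^ (n * k)) ((\<sigma> ^^ k) x) = sc (z ^ k) x" for k
    using funpow_eigenvector[of x "\<omega> ^ i" k] assms(1)
    unfolding z_def eigcomp_def by (simp add: power_mult_distrib mult.commute flip: power_mult)
  then have "eigenproj n x = sc (inverse (of_nat m) * (\<Sum>k<m. z ^ k)) x"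
    unfolding eigenproj_def by (simp add: scale_sum_left flip: scale_scale)
  moreover have "z ^ m = 1"
    unfolding z_def by (simp add: power_mult_distrib power_inverse power_omega_pow_order)
  moreover have "z = 1 \<longleftrightarrow> i mod m = n"
    using omega_nonzero omega_pow_eq_iff[of i n] assms(2)
    unfolding z_def by (auto simp: field_simps)
  ultimately show ?thesis
    using order_nonzero by (simp add: sum_powers_root_of_unity)
qed

lemma sum_eigenproj: "(\<Sum>n<m. eigenproj n x) = x"
proof -
  have "(\<Sum>n<m. eigenproj n x)
      = sc (inverse (of_nat m)) (\<Sum>k<m. \<Sum>n<m. sc (inverse \<omega> ^ (n * k)) ((\<sigma> ^^ k) x))"
    unfolding eigenproj_def by (subst sum.swap) (simp add: scale_sum_right)
  also have "(\<Sum>k<m. \<Sum>n<m. sc (inverse \<omega> ^ (n * k)) ((\<sigma> ^^ k) x))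
      = (\<Sum>k<m. sc (\<Sum>n<m. (inverse \<omega> ^ k) ^ n) ((\<sigma> ^^ k) x))"
    by (simp add: scale_sum_left mult.commute flip: power_mult)
  also have "(\<Sum>k<m. sc (\<Sum>n<m. (inverse \<omega> ^ k) ^ n) ((\<sigma> ^^ k) x))
      = (\<Sum>k<m. if k = 0 then sc (of_nat m) x else 0)"
  proof (rule sum.cong[OF refl])
    fix k assume "k \<in> {..<m}"
    then have "inverse \<omega> ^ k = 1 \<longleftrightarrow> k = 0"
      using omega_pow_eq_iff[of k 0] by (simp add: power_inverse)
    then show "sc (\<Sum>n<m. (inverse \<omega> ^ k) ^ n) ((\<sigma> ^^ k) x) = (if k = 0 then sc (of_nat m) x else 0)"
      using sum_powers_root_of_unity[of "inverse \<omega> ^ k" m] power_omega_pow_order[of k]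
      by (auto simp: power_inverse)
  qed
  finally show ?thesis
    using order_pos order_nonzero by simp
qed

lemma eigenproj_in_Eig: "eigenproj n x \<in> Eig n"
proof -
  define f where "f k = sc (inverse \<omega> ^ (n * k)) ((\<sigma> ^^ k) x)" for k
  have "\<sigma> (f k) = sc (\<omega> ^ n) (f (Suc k))" for k
    using omega_nonzero
    by (simp add: f_def endo.linear_scale[OF linear_\<sigma>] power_add power_inverse field_simps)
  then have "\<sigma> (\<Sum>k<m. f k) = sc (\<omega> ^ n) (\<Sum>k<m. f (Suc k))"
    by (simp add: endo.linear_sum[OF linear_\<sigma>] scale_sum_right)
  also have "(\<Sum>k<m. f (Suc k)) = (\<Sum>k<m. f k)"
  proof -
    have "f m = f 0"
      using \<sigma>_order root by (simp add: f_def mult.commute power_mult power_inverse)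
    then show ?thesis
      using sum.lessThan_Suc_shift[of f m] sum.lessThan_Suc[of f m] by simp
  qed
  finally show ?thesis
    unfolding eigcomp_def eigenproj_def f_def[symmetric]
    by (simp add: endo.linear_scale[OF linear_\<sigma>] mult.commute)
qed

end

section \<open>Bilinear maps and the universal property of the tensor product\<close>

locale bilinear_map =
  fixes scA :: "'k::field \<Rightarrow> 'a::ab_group_add \<Rightarrow> 'a"
    and scS :: "'k \<Rightarrow> 's::ab_group_add \<Rightarrow> 's"
    and scU :: "'k \<Rightarrow> 'u::ab_group_add \<Rightarrow> 'u"
    and B :: "'a \<Rightarrow> 's \<Rightarrow> 'u"
  assumes vector_space_left: "vector_space scA"
    and vector_space_right: "vector_space scS"
    and vector_space_target: "vector_space scU"
    and add_left: "B (x + y) s = B x s + B y s"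
    and scale_left: "B (scA c x) s = scU c (B x s)"
    and add_right: "B x (s + t) = B x s + B x t"
    and scale_right: "B x (scS c s) = scU c (B x s)"
begin

lemma zero_left: "B 0 s = 0"
  using add_left[of 0 0 s] by simp

lemma zero_right: "B x 0 = 0"
  using add_right[of x 0 0] by simp

lemma neg_left: "B (- x) s = - B x s"
  using add_left[of x "- x" s] by (simp add: zero_left eq_neg_iff_add_eq_0 add.commute)

lemma sum_left: "B (\<Sum>i\<in>I. a i) s = (\<Sum>i\<in>I. B (a i) s)"
  by (induction I rule: infinite_finite_induct) (auto simp: zero_left add_left)

lemma sum_right: "B x (\<Sum>i\<in>I. s i) = (\<Sum>i\<in>I. B x (s i))"
  by (induction I rule: infinite_finite_induct) (auto simp: zero_right add_right)

lemma diff_left: "B (x - y) s = B x s - B y s"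
  using add_left[of "x - y" y s] by (simp add: eq_diff_eq)

lemma diff_right: "B x (s - t) = B x s - B x t"
  using add_right[of x "s - t" t] by (simp add: eq_diff_eq)

lemma sum_list_neg_left:
  "(\<Sum>(a, s)\<leftarrow>map (\<lambda>(a, s). (- a, s)) xs. B a s) = - (\<Sum>(a, s)\<leftarrow>xs. B a s)"
  by (induction xs) (auto simp: neg_left)

lemma sum_list_scale_left:
  "(\<Sum>(a, s)\<leftarrow>map (\<lambda>(a, s). (scA c a, s)) xs. B a s) = scU c (\<Sum>(a, s)\<leftarrow>xs. B a s)"
proof -
  interpret U: vector_space scU by (rule vector_space_target)
  show ?thesis by (induction xs) (auto simp: scale_left U.scale_right_distrib)
qed

lemma sum_eliminate_dependent:
  assumes "finite I" "k \<in> I" "s k = (\<Sum>i\<in>I - {k}. scS (c i) (s i))"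
  shows "(\<Sum>i\<in>I. B (a i) (s i)) = (\<Sum>i\<in>I - {k}. B (a i + scA (c i) (a k)) (s i))"
proof -
  have "(\<Sum>i\<in>I. B (a i) (s i)) = B (a k) (s k) + (\<Sum>i\<in>I - {k}. B (a i) (s i))"
    using assms by (simp add: sum.remove)
  also have "B (a k) (s k) = (\<Sum>i\<in>I - {k}. B (scA (c i) (a k)) (s i))"
    by (subst assms(3)) (simp add: sum_right scale_left scale_right)
  finally show ?thesis by (simp add: add_left sum.distrib add.commute)
qed

end

lemma (in vector_space) span_image_eq_sum:
  assumes "finite J" "y \<in> span (s ` J)"
  shows "\<exists>c. y = (\<Sum>i\<in>J. scale (c i) (s i))"
  using assms(2)
proof (induction rule: span_induct_alt)
  case base
  show ?case by (intro exI[of _ "\<lambda>_. 0"]) simp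
next
  case (step c x y)
  then obtain j c' where j: "j \<in> J" "x = s j" and y: "y = (\<Sum>i\<in>J. scale (c' i) (s i))"
    by auto
  have "scale c x = (\<Sum>i\<in>J. scale (if i = j then c else 0) (s i))"
    using j assms(1) by (simp add: if_distrib[of "\<lambda>c. scale c _"] sum.delta cong: if_cong)
  then have "scale c x + y = (\<Sum>i\<in>J. scale ((if i = j then c else 0) + c' i) (s i))"
    by (simp add: y scale_left_distrib sum.distrib)
  then show ?case by (intro exI[of _ "\<lambda>i. (if i = j then c else 0) + c' i"])
qed

lemma (in vector_space) exists_in_span_image_remove:
  assumes "\<not> (inj_on s I \<and> independent (s ` I))"
  shows "\<exists>k\<in>I. s k \<in> span (s ` (I - {k}))"
proof (cases "inj_on s I")
  case True
  with assms have "dependent (s ` I)"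
    by simp
  then obtain k where k: "k \<in> I" "s k \<in> span (s ` I - {s k})"
    unfolding dependent_def by blast
  moreover have "s ` I - {s k} = s ` (I - {k})"
    using True k(1) by (auto simp: inj_on_def)
  ultimately show ?thesis
    by auto
next
  case False
  then obtain i j where "i \<in> I" "j \<in> I" "i \<noteq> j" "s i = s j"
    unfolding inj_on_def by blast
  then show ?thesis
    by (intro bexI[of _ i]) (auto intro: span_base)
qed

locale tensor_product =
  fixes scA :: "'k::field \<Rightarrow> 'a::ab_group_add \<Rightarrow> 'a"
    and scS :: "'k \<Rightarrow> 's::ab_group_add \<Rightarrow> 's"
    and scT :: "'k \<Rightarrow> 't::ab_group_add \<Rightarrow> 't"
    and tens :: "'a \<Rightarrow> 's \<Rightarrow> 't"
  assumes is_tensor: "is_tensor scA UNIV scS scT tens"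
    and vector_space_A: "vector_space scA"
    and vector_space_S: "vector_space scS"
begin

sublocale A: vector_space scA by (rule vector_space_A)
sublocale S: vector_space scS by (rule vector_space_S)
sublocale T: vector_space scT using is_tensor by (simp add: is_tensor_def)
sublocale endo: vector_space_pair scT scT ..

sublocale tensor: bilinear_map scA scS scT tens
  using is_tensor unfolding is_tensor_def
  by unfold_locales (simp_all add: vector_space_A vector_space_S)

lemma span_tensors: "T.span {tens a s | a s. True} = UNIV"
  using is_tensor by (simp add: is_tensor_def)

lemma tensor_sum_eq_0_independent:
  assumes "finite F" "\<not> S.dependent F" "(\<Sum>s\<in>F. tens (f s) s) = 0" "s \<in> F"
  shows "f s = 0"
  using is_tensor assms unfolding is_tensor_def by blast

lemma bilinear_sum_eq_0_if_tensor_sum_eq_0: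
  assumes B: "bilinear_map scA scS scU B"
  shows "finite I \<Longrightarrow> (\<Sum>i\<in>I. tens (a i) (s i)) = 0 \<Longrightarrow> (\<Sum>i\<in>I. B (a i) (s i)) = 0"
proof (induction "card I" arbitrary: I a rule: less_induct)
  case less
  interpret B: bilinear_map scA scS scU B by (rule B)
  show ?case
  proof (cases "inj_on s I \<and> \<not> S.dependent (s ` I)")
    case True
    have "(\<Sum>t\<in>s ` I. tens (a (inv_into I s t)) t) = 0"
      using True less.prems by (simp add: sum.reindex)
    then have "a (inv_into I s t) = 0" if "t \<in> s ` I" for t
      using tensor_sum_eq_0_independent[of "s ` I"] True less.prems(1) that by simp
    then have "a i = 0" if "i \<in> I" for i
      using True that inv_into_f_f[of s I i] by force
    then show ?thesis by (simp add: B.zero_left)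
  next
    case False
    have "\<exists>k\<in>I. s k \<in> S.span (s ` (I - {k}))"
      using False by (rule S.exists_in_span_image_remove)
    then obtain k where k: "k \<in> I" "s k \<in> S.span (s ` (I - {k}))"
      by blast
    then obtain c where c: "s k = (\<Sum>i\<in>I - {k}. scS (c i) (s i))"
      using S.span_image_eq_sum less.prems(1) by blast
    define a' where "a' i = a i + scA (c i) (a k)" for i
    have "card (I - {k}) < card I"
      using less.prems(1) k(1) by (rule card_Diff1_less)
    moreover have "(\<Sum>i\<in>I - {k}. tens (a' i) (s i)) = 0"
      using tensor.sum_eliminate_dependent[OF less.prems(1) k(1) c, of a] less.prems(2)
      by (simp add: a'_def)
    ultimately have "(\<Sum>i\<in>I - {k}. B (a' i) (s i)) = 0"
      using less.hyps[of "I - {k}" a'] less.prems(1) by simp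
    then show ?thesis
      using B.sum_eliminate_dependent[OF less.prems(1) k(1) c, of a] by (simp add: a'_def)
  qed
qed

lemma bilinear_sum_list_eq_if_tensor_sum_list_eq:
  assumes B: "bilinear_map scA scS scU B"
    and eq: "(\<Sum>(a, s)\<leftarrow>xs. tens a s) = (\<Sum>(a, s)\<leftarrow>ys. tens a s)"
  shows "(\<Sum>(a, s)\<leftarrow>xs. B a s) = (\<Sum>(a, s)\<leftarrow>ys. B a s)"
proof -
  interpret B: bilinear_map scA scS scU B by (rule B)
  define zs where "zs = xs @ map (\<lambda>(a, s). (- a, s)) ys"
  have "(\<Sum>(a, s)\<leftarrow>zs. tens a s) = 0"
    using eq unfolding zs_def
    by (simp only: map_append sum_list_append tensor.sum_list_neg_left) simp
  then have "(\<Sum>i\<in>{0..<length zs}. tens (fst (zs ! i)) (snd (zs ! i))) = 0"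
    by (simp add: sum_list_sum_nth case_prod_beta)
  then have "(\<Sum>i\<in>{0..<length zs}. B (fst (zs ! i)) (snd (zs ! i))) = 0"
    by (rule bilinear_sum_eq_0_if_tensor_sum_eq_0[OF B, rotated]) simp
  then have "(\<Sum>(a, s)\<leftarrow>zs. B a s) = 0"
    by (simp add: sum_list_sum_nth case_prod_beta)
  then show ?thesis
    unfolding zs_def by (simp only: map_append sum_list_append B.sum_list_neg_left) simp
qed

lemma exists_tensor_sum_list: "\<exists>xs. x = (\<Sum>(a, s)\<leftarrow>xs. tens a s)"
proof -
  have "x \<in> T.span {tens a s | a s. True}"
    using span_tensors by simp
  then show ?thesis
  proof (induction rule: T.span_induct_alt)
    case base
    show ?case
      by (intro exI[of _ "[]"]) simp
  next
    case (step c x y)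
    then obtain a s ys where "x = tens a s" "y = (\<Sum>(a, s)\<leftarrow>ys. tens a s)"
      by auto
    then have "scT c x + y = (\<Sum>(a, s)\<leftarrow>(scA c a, s) # ys. tens a s)"
      by (simp add: tensor.scale_left)
    then show ?case
      by blast
  qed
qed

lemma tensor_universal:
  assumes B: "bilinear_map scA scS scU B"
  shows "\<exists>F. Vector_Spaces.linear scT scU F \<and> (\<forall>a s. F (tens a s) = B a s)"
proof -
  interpret B: bilinear_map scA scS scU B by (rule B)
  interpret U: vector_space scU by (rule B.vector_space_target)
  define tsum where "tsum xs = (\<Sum>(a, s)\<leftarrow>xs. tens a s)" for xs
  define bsum where "bsum xs = (\<Sum>(a, s)\<leftarrow>xs. B a s)" for xs
  define F where "F x = bsum (SOME xs. x = tsum xs)" for x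
  have F_tsum: "F (tsum xs) = bsum xs" for xs
    unfolding F_def tsum_def bsum_def
    by (rule bilinear_sum_list_eq_if_tensor_sum_list_eq[OF B, symmetric], rule someI) simp
  have "Vector_Spaces.linear scT scU F"
    unfolding Vector_Spaces.linear_iff
  proof (intro conjI allI)
    fix x y
    obtain xs ys where "x = tsum xs" "y = tsum ys"
      using exists_tensor_sum_list unfolding tsum_def by blast
    moreover have "tsum xs + tsum ys = tsum (xs @ ys)"
      by (simp add: tsum_def)
    ultimately show "F (x + y) = F x + F y"
      by (simp add: F_tsum) (simp add: bsum_def)
  next
    fix c x
    obtain xs where "x = tsum xs"
      using exists_tensor_sum_list unfolding tsum_def by blast
    moreover have "scT c (tsum xs) = tsum (map (\<lambda>(a, s). (scA c a, s)) xs)"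
      unfolding tsum_def by (simp only: tensor.sum_list_scale_left)
    ultimately show "F (scT c x) = scU c (F x)"
      by (simp only: F_tsum) (simp only: bsum_def B.sum_list_scale_left)
  qed (unfold_locales)
  moreover have "F (tens a s) = B a s" for a s
    using F_tsum[of "[(a, s)]"] by (simp add: tsum_def bsum_def)
  ultimately show ?thesis
    by blast
qed

definition tensor_lift ::
    "('k \<Rightarrow> 'u::ab_group_add \<Rightarrow> 'u) \<Rightarrow> ('a \<Rightarrow> 's \<Rightarrow> 'u) \<Rightarrow> 't \<Rightarrow> 'u" where
  "tensor_lift scU B = (SOME F. Vector_Spaces.linear scT scU F \<and> (\<forall>a s. F (tens a s) = B a s))"

lemma
  assumes "bilinear_map scA scS scU B"
  shows linear_tensor_lift: "Vector_Spaces.linear scT scU (tensor_lift scU B)"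
    and tensor_lift_tens: "tensor_lift scU B (tens a s) = B a s"
  using someI_ex[OF tensor_universal[OF assms]] unfolding tensor_lift_def by blast+

lemma linear_eq_on_tensors:
  assumes "Vector_Spaces.linear scT scU f" "Vector_Spaces.linear scT scU g"
    and "\<And>a s. f (tens a s) = g (tens a s)"
  shows "f x = g x"
proof -
  interpret U: vector_space scU
    using assms(1) by (simp add: Vector_Spaces.linear_iff)
  interpret vector_space_pair scT scU ..
  show ?thesis
    by (rule linear_eq_on[OF assms(1,2)]) (use span_tensors assms(3) in auto)
qed

lemma bilinear_eq_on_tensors:
  assumes "bilinear_map scT scT scU F" "bilinear_map scT scT scU G"
    and "\<And>a s b t. F (tens a s) (tens b t) = G (tens a s) (tens b t)"
  shows "F x y = G x y"
proof -
  have lin_l: "Vector_Spaces.linear scT scU (\<lambda>x. H x y)" if "bilinear_map scT scT scU H" for H y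
    using that unfolding bilinear_map_def Vector_Spaces.linear_iff by blast
  have lin_r: "Vector_Spaces.linear scT scU (H x)" if "bilinear_map scT scT scU H" for H x
    using that unfolding bilinear_map_def Vector_Spaces.linear_iff by blast
  have "F x (tens b t) = G x (tens b t)" for b t
    by (rule linear_eq_on_tensors[OF lin_l[OF assms(1)] lin_l[OF assms(2)]]) (rule assms(3))
  then show ?thesis
    by (rule linear_eq_on_tensors[OF lin_r[OF assms(1)] lin_r[OF assms(2)]])
qed

end

section \<open>Extending derivations from the fixed-point subalgebra\<close>

context vector_space
begin

lemma linear_if_centroid: "f \<in> centroid scale mul \<Longrightarrow> Vector_Spaces.linear scale scale f"
  by (simp add: centroid_def)

lemma id_in_centroid: "id \<in> centroid scale mul"
  by (simp add: centroid_def linear_id)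

lemma comp_in_centroid:
  assumes f: "f \<in> centroid scale mul" and g: "g \<in> centroid scale mul"
  shows "f \<circ> g \<in> centroid scale mul"
  unfolding centroid_def
proof (intro CollectI conjI allI)
  have f_mul: "f (mul x y) = mul (f x) y" "f (mul x y) = mul x (f y)"
    and g_mul: "g (mul x y) = mul (g x) y" "g (mul x y) = mul x (g y)" for x y
    using f g unfolding centroid_def by blast+
  show "Vector_Spaces.linear scale scale (f \<circ> g)"
    using f g Vector_Spaces.linear_compose[of scale scale g scale f] by (simp add: centroid_def)
  show "(f \<circ> g) (mul x y) = mul ((f \<circ> g) x) y" for x y
    by (simp only: comp_apply f_mul(1) g_mul(1))
  show "(f \<circ> g) (mul x y) = mul x ((f \<circ> g) y)" for x y
    by (simp only: comp_apply f_mul(2) g_mul(2))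
qed

lemma funpow_in_centroid: "f \<in> centroid scale mul \<Longrightarrow> f ^^ n \<in> centroid scale mul"
  by (induction n) (simp_all add: id_in_centroid comp_in_centroid)

lemma inverse_in_centroid:
  assumes f: "f \<in> centroid scale mul" and fg: "\<And>x. f (g x) = x" and gf: "\<And>x. g (f x) = x"
  shows "g \<in> centroid scale mul"
proof -
  interpret f: Vector_Spaces.linear scale scale f
    using f by (rule linear_if_centroid)
  have f_mul: "f (mul x y) = mul (f x) y" "f (mul x y) = mul x (f y)" for x y
    using f unfolding centroid_def by blast+
  have "g (x + y) = g x + g y" for x y
    using gf[of "g x + g y"] by (simp add: f.add fg)
  moreover have "g (scale c x) = scale c (g x)" for c x
    using gf[of "scale c (g x)"] by (simp add: f.scale fg)
  moreover have "g (mul x y) = mul (g x) y" for x y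
    using gf[of "mul (g x) y"] by (simp add: f_mul(1) fg)
  moreover have "g (mul x y) = mul x (g y)" for x y
    using gf[of "mul x (g y)"] by (simp add: f_mul(2) fg)
  ultimately show ?thesis
    unfolding centroid_def Vector_Spaces.linear_iff by (simp add: vector_space_axioms)
qed

end

locale cyclic_algebra = cyclic_operator sc \<sigma> \<omega> m
  for sc :: "'k::field \<Rightarrow> 'b::ab_group_add \<Rightarrow> 'b" and \<sigma> \<omega> m +
  fixes mul :: "'b \<Rightarrow> 'b \<Rightarrow> 'b"
  assumes algebra: "k_algebra sc mul"
    and \<sigma>_mul: "\<sigma> (mul x y) = mul (\<sigma> x) (\<sigma> y)"
begin

sublocale mul: bilinear_map sc sc sc mul
  using algebra unfolding k_algebra_def by unfold_locales auto

lemma mul_Eig: "x \<in> Eig i \<Longrightarrow> y \<in> Eig j \<Longrightarrow> mul x y \<in> Eig (i + j)"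
  unfolding eigcomp_def by (simp add: \<sigma>_mul mul.scale_left mul.scale_right power_add mult.commute)

end

locale derivation_extension = cyclic_algebra sc \<sigma> \<omega> m mul
  for sc :: "'k::field \<Rightarrow> 'b::ab_group_add \<Rightarrow> 'b" and \<sigma> \<omega> m mul +
  fixes U V d :: "'b \<Rightarrow> 'b"
  assumes U_centroid: "U \<in> centroid sc mul"
    and U_V: "U (V x) = x" and V_U: "V (U x) = x"
    and \<sigma>_U: "\<sigma> (U x) = sc \<omega> (U (\<sigma> x))"
    and derivation_d: "d \<in> derivations_on sc mul (Eig 0)"
begin

lemma funpow_U_centroid: "U ^^ n \<in> centroid sc mul"
  by (rule funpow_in_centroid[OF U_centroid])

lemma funpow_V_centroid: "V ^^ n \<in> centroid sc mul"
  by (rule funpow_in_centroid[OF inverse_in_centroid[OF U_centroid U_V V_U]])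

lemmas linear_funpow_U = linear_if_centroid[OF funpow_U_centroid]
lemmas linear_funpow_V = linear_if_centroid[OF funpow_V_centroid]

lemma funpow_U_mul_left: "(U ^^ n) (mul x y) = mul ((U ^^ n) x) y"
  and funpow_U_mul_right: "(U ^^ n) (mul x y) = mul x ((U ^^ n) y)"
  using funpow_U_centroid[of n] unfolding centroid_def by blast+

lemma funpow_V_mul_left: "(V ^^ n) (mul x y) = mul ((V ^^ n) x) y"
  and funpow_V_mul_right: "(V ^^ n) (mul x y) = mul x ((V ^^ n) y)"
  using funpow_V_centroid[of n] unfolding centroid_def by blast+

lemma funpow_U_V: "(U ^^ n) ((V ^^ n) x) = x"
proof (induction n arbitrary: x)
  case (Suc n)
  have "(V ^^ Suc n) x = (V ^^ n) (V x)"
    by (simp only: funpow_Suc_right comp_apply)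
  then show ?case
    by (simp add: Suc U_V)
qed simp

lemma funpow_V_U: "(V ^^ n) ((U ^^ n) x) = x"
proof (induction n arbitrary: x)
  case (Suc n)
  have "(U ^^ Suc n) x = (U ^^ n) (U x)"
    by (simp only: funpow_Suc_right comp_apply)
  then show ?case
    by (simp add: Suc V_U)
qed simp

lemma mul_funpow_U: "mul ((U ^^ i) x) ((U ^^ j) y) = (U ^^ (i + j)) (mul x y)"
proof -
  have "mul ((U ^^ i) x) ((U ^^ j) y) = (U ^^ i) (mul x ((U ^^ j) y))"
    by (rule funpow_U_mul_left[symmetric])
  also have "\<dots> = (U ^^ i) ((U ^^ j) (mul x y))"
    by (simp only: funpow_U_mul_right)
  finally show ?thesis
    by (simp add: funpow_add)
qed

lemma \<sigma>_funpow_U: "\<sigma> ((U ^^ n) x) = sc (\<omega> ^ n) ((U ^^ n) (\<sigma> x))"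
  by (induction n)
    (simp_all add: \<sigma>_U endo.linear_scale[OF linear_if_centroid[OF U_centroid]] mult.commute)

lemma funpow_U_Eig: "x \<in> Eig i \<Longrightarrow> (U ^^ n) x \<in> Eig (i + n)"
  unfolding eigcomp_def
  by (simp add: \<sigma>_funpow_U endo.linear_scale[OF linear_funpow_U] power_add mult.commute)

lemma funpow_V_Eig:
  assumes "x \<in> Eig (i + n)"
  shows "(V ^^ n) x \<in> Eig i"
proof -
  let ?y = "(V ^^ n) x"
  have "sc (\<omega> ^ n) ((U ^^ n) (\<sigma> ?y)) = sc (\<omega> ^ n) ((U ^^ n) (sc (\<omega> ^ i) ?y))"
    using assms \<sigma>_funpow_U[of n ?y]
    by (simp add: eigcomp_def funpow_U_V endo.linear_scale[OF linear_funpow_U] power_add mult.commute)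
  then have "(U ^^ n) (\<sigma> ?y) = (U ^^ n) (sc (\<omega> ^ i) ?y)"
    using omega_nonzero by simp
  then have "(V ^^ n) ((U ^^ n) (\<sigma> ?y)) = (V ^^ n) ((U ^^ n) (sc (\<omega> ^ i) ?y))"
    by simp
  then show ?thesis
    by (simp add: eigcomp_def funpow_V_U)
qed

lemma funpow_U_order_Eig0: "x \<in> Eig 0 \<Longrightarrow> (U ^^ m) x \<in> Eig 0"
  using funpow_U_Eig[of x 0 m] Eig_mod[of m] by simp

lemma funpow_V_order_Eig0: "x \<in> Eig 0 \<Longrightarrow> (V ^^ m) x \<in> Eig 0"
  using funpow_V_Eig[of x 0 m] Eig_mod[of m] by simp

lemma d_Eig0: "x \<in> Eig 0 \<Longrightarrow> d x \<in> Eig 0"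
  and d_add: "x \<in> Eig 0 \<Longrightarrow> y \<in> Eig 0 \<Longrightarrow> d (x + y) = d x + d y"
  and d_scale: "x \<in> Eig 0 \<Longrightarrow> d (sc c x) = sc c (d x)"
  and d_mul: "x \<in> Eig 0 \<Longrightarrow> y \<in> Eig 0 \<Longrightarrow> d (mul x y) = mul (d x) y + mul x (d y)"
  using derivation_d unfolding derivations_on_def by blast+

lemma d_zero: "d 0 = 0"
  using d_add[of 0 0] subspace_0[OF subspace_Eig] by simp

definition defect :: "'b \<Rightarrow> 'b" where
  "defect z = (V ^^ m) (d ((U ^^ m) z)) - d z"

lemma defect_Eig0: "z \<in> Eig 0 \<Longrightarrow> defect z \<in> Eig 0"
  unfolding defect_def
  by (intro subspace_diff[OF subspace_Eig] funpow_V_order_Eig0 d_Eig0 funpow_U_order_Eig0)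

lemma defect_add: "x \<in> Eig 0 \<Longrightarrow> y \<in> Eig 0 \<Longrightarrow> defect (x + y) = defect x + defect y"
  unfolding defect_def
  by (simp add: endo.linear_add[OF linear_funpow_U] endo.linear_add[OF linear_funpow_V]
      d_add funpow_U_order_Eig0)

lemma defect_scale: "x \<in> Eig 0 \<Longrightarrow> defect (sc c x) = sc c (defect x)"
  unfolding defect_def
  by (simp add: endo.linear_scale[OF linear_funpow_U] endo.linear_scale[OF linear_funpow_V]
      d_scale funpow_U_order_Eig0 scale_right_diff_distrib)

lemma defect_zero: "defect 0 = 0"
  using defect_scale[of 0 0] subspace_0[OF subspace_Eig] by simp

lemma defect_mul_left:
  assumes "x \<in> Eig 0" "y \<in> Eig 0"
  shows "defect (mul x y) = mul (defect x) y"
proof -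
  have "(V ^^ m) (d ((U ^^ m) (mul x y))) = mul ((V ^^ m) (d ((U ^^ m) x))) y + mul x (d y)"
    using assms
    by (simp add: funpow_U_mul_left d_mul funpow_U_order_Eig0 endo.linear_add[OF linear_funpow_V]
        funpow_V_mul_left funpow_V_U)
  then show ?thesis
    unfolding defect_def using assms by (simp add: d_mul mul.diff_left)
qed

lemma defect_mul_right:
  assumes "x \<in> Eig 0" "y \<in> Eig 0"
  shows "defect (mul x y) = mul x (defect y)"
proof -
  have "(V ^^ m) (d ((U ^^ m) (mul x y))) = mul (d x) y + mul x ((V ^^ m) (d ((U ^^ m) y)))"
    using assms
    by (simp add: funpow_U_mul_right d_mul funpow_U_order_Eig0 endo.linear_add[OF linear_funpow_V]
        funpow_V_mul_right funpow_V_U)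
  then show ?thesis
    unfolding defect_def using assms by (simp add: d_mul mul.diff_right)
qed

lemma d_funpow_U_order: "z \<in> Eig 0 \<Longrightarrow> d ((U ^^ m) z) = (U ^^ m) (d z + defect z)"
  unfolding defect_def by (simp add: funpow_U_V)

lemma defect_funpow_U_order_mul:
  assumes "x \<in> Eig 0" "y \<in> Eig 0"
  shows "defect ((U ^^ m) (mul x y)) = (U ^^ m) (defect (mul x y))"
  using assms
  by (simp add: funpow_U_mul_left defect_mul_right funpow_U_order_Eig0)

definition degree_extension :: "nat \<Rightarrow> 'b \<Rightarrow> 'b" where
  "degree_extension n z = (U ^^ n) (d z + sc (of_nat n / of_nat m) (defect z))"

lemma degree_extension_Eig: "z \<in> Eig 0 \<Longrightarrow> degree_extension n z \<in> Eig n"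
  unfolding degree_extension_def
  using funpow_U_Eig[of "d z + sc (of_nat n / of_nat m) (defect z)" 0 n]
  by (simp add: subspace_add[OF subspace_Eig] subspace_scale[OF subspace_Eig] d_Eig0 defect_Eig0)

lemma degree_extension_zero_degree: "degree_extension 0 z = d z"
  by (simp add: degree_extension_def)

lemma degree_extension_add:
  "x \<in> Eig 0 \<Longrightarrow> y \<in> Eig 0 \<Longrightarrow>
    degree_extension n (x + y) = degree_extension n x + degree_extension n y"
  unfolding degree_extension_def
  by (simp add: d_add defect_add endo.linear_add[OF linear_funpow_U] scale_right_distrib ac_simps)

lemma degree_extension_scale: "x \<in> Eig 0 \<Longrightarrow> degree_extension n (sc c x) = sc c (degree_extension n x)"
  unfolding degree_extension_def
  by (simp add: d_scale defect_scale endo.linear_add[OF linear_funpow_U]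
      endo.linear_scale[OF linear_funpow_U] scale_right_distrib mult.commute)

lemma degree_extension_zero: "degree_extension n 0 = 0"
  by (simp add: degree_extension_def d_zero defect_zero endo.linear_0[OF linear_funpow_U])

text \<open>The weight n/m is chosen so that this holds: advancing the degree by m costs exactly one
  defect.\<close>
lemma degree_extension_shift_order:
  assumes "x \<in> Eig 0" "y \<in> Eig 0"
  shows "degree_extension n ((U ^^ m) (mul x y)) = degree_extension (n + m) (mul x y)"
proof -
  let ?w = "mul x y" and ?c = "of_nat n / of_nat m :: 'k"
  have one_more_defect: "defect ?w + sc ?c (defect ?w) = sc (of_nat (n + m) / of_nat m) (defect ?w)"
    using order_nonzero by (simp add: add_divide_distrib scale_left_distrib)
  have "degree_extension n ((U ^^ m) ?w) = (U ^^ n) ((U ^^ m) (d ?w + defect ?w) + sc ?c ((U ^^ m) (defect ?w)))"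
    using assms mul_Eig[OF assms]
    by (simp add: degree_extension_def d_funpow_U_order defect_funpow_U_order_mul)
  also have "\<dots> = (U ^^ n) ((U ^^ m) (d ?w + sc (of_nat (n + m) / of_nat m) (defect ?w)))"
    by (simp only: endo.linear_add[OF linear_funpow_U, symmetric]
        endo.linear_scale[OF linear_funpow_U, symmetric] add.assoc one_more_defect)
  also have "\<dots> = degree_extension (n + m) ?w"
    by (simp only: degree_extension_def funpow_add comp_apply)
  finally show ?thesis .
qed

lemma degree_extension_mul:
  assumes "x \<in> Eig 0" "y \<in> Eig 0"
  shows "degree_extension (i + j) (mul x y)
    = mul (degree_extension i x) ((U ^^ j) y) + mul ((U ^^ i) x) (degree_extension j y)"
proof -
  let ?a = "of_nat i / of_nat m :: 'k" and ?b = "of_nat j / of_nat m :: 'k"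
  have "d (mul x y) + sc (of_nat (i + j) / of_nat m) (defect (mul x y))
      = mul (d x + sc ?a (defect x)) y + mul x (d y + sc ?b (defect y))"
    using assms
    by (simp add: d_mul mul.add_left mul.add_right mul.scale_left mul.scale_right
        add_divide_distrib scale_left_distrib defect_mul_left[symmetric] defect_mul_right[symmetric]
        ac_simps)
  then show ?thesis
    unfolding degree_extension_def mul_funpow_U by (simp only: endo.linear_add[OF linear_funpow_U, symmetric])
qed

definition extension :: "'b \<Rightarrow> 'b" where
  "extension x = (\<Sum>n<m. degree_extension n ((V ^^ n) (eigenproj n x)))"

lemma funpow_V_eigenproj: "(V ^^ n) (eigenproj n x) \<in> Eig 0"
  using funpow_V_Eig[of "eigenproj n x" 0 n] eigenproj_in_Eig by simp

lemma extension_funpow_U: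
  assumes "n < m" "z \<in> Eig 0"
  shows "extension ((U ^^ n) z) = degree_extension n z"
proof -
  have "eigenproj k ((U ^^ n) z) = (if k = n then (U ^^ n) z else 0)" if "k < m" for k
    using eigenproj_Eig[OF funpow_U_Eig[OF assms(2)] that] assms(1) by auto
  then have "extension ((U ^^ n) z) = (\<Sum>k<m. if k = n then degree_extension n z else 0)"
    unfolding extension_def
    by (intro sum.cong) (auto simp: funpow_V_U endo.linear_0[OF linear_funpow_V] degree_extension_zero)
  then show ?thesis
    using assms(1) by simp
qed

lemma extension_funpow_U_mul:
  assumes "i < m" "j < m" "x \<in> Eig 0" "y \<in> Eig 0"
  shows "extension ((U ^^ (i + j)) (mul x y)) = degree_extension (i + j) (mul x y)"
proof (cases "i + j < m")
  case True
  then show ?thesis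
    using extension_funpow_U mul_Eig[OF assms(3,4)] by simp
next
  case False
  define r where "r = i + j - m"
  have "r < m" "i + j = r + m"
    using assms(1,2) False by (auto simp: r_def)
  moreover have "(U ^^ m) (mul x y) \<in> Eig 0"
    using funpow_U_order_Eig0 mul_Eig[OF assms(3,4)] by simp
  ultimately show ?thesis
    using extension_funpow_U degree_extension_shift_order[OF assms(3,4)] by (simp add: funpow_add)
qed

lemma linear_extension: "Vector_Spaces.linear sc sc extension"
  unfolding Vector_Spaces.linear_iff extension_def
  by (simp add: vector_space_axioms endo.linear_add[OF linear_eigenproj]
      endo.linear_scale[OF linear_eigenproj] endo.linear_add[OF linear_funpow_V]
      endo.linear_scale[OF linear_funpow_V] degree_extension_add degree_extension_scale funpow_V_eigenproj
      sum.distrib scale_sum_right)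

lemma extension_mul_Eig:
  assumes "i < m" "j < m" "x \<in> Eig i" "y \<in> Eig j"
  shows "extension (mul x y) = mul (extension x) y + mul x (extension y)"
proof -
  define x' y' where "x' = (V ^^ i) x" and "y' = (V ^^ j) y"
  have x': "x' \<in> Eig 0" and y': "y' \<in> Eig 0"
    using funpow_V_Eig[of x 0 i] funpow_V_Eig[of y 0 j] assms by (simp_all add: x'_def y'_def)
  have "x = (U ^^ i) x'" "y = (U ^^ j) y'"
    by (simp_all add: x'_def y'_def funpow_U_V)
  then show ?thesis
    using assms(1,2) x' y'
    by (simp add: mul_funpow_U extension_funpow_U_mul extension_funpow_U degree_extension_mul)
qed

lemma extension_mul: "extension (mul x y) = mul (extension x) y + mul x (extension y)"
proof -
  have "mul x y = mul (\<Sum>i<m. eigenproj i x) (\<Sum>j<m. eigenproj j y)"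
    by (simp only: sum_eigenproj)
  also have "\<dots> = (\<Sum>i<m. \<Sum>j<m. mul (eigenproj i x) (eigenproj j y))"
    by (simp only: mul.sum_left) (simp only: mul.sum_right)
  finally have "mul x y = (\<Sum>i<m. \<Sum>j<m. mul (eigenproj i x) (eigenproj j y))" .
  then have "extension (mul x y)
      = (\<Sum>i<m. \<Sum>j<m. mul (extension (eigenproj i x)) (eigenproj j y)
          + mul (eigenproj i x) (extension (eigenproj j y)))"
    by (simp add: endo.linear_sum[OF linear_extension] extension_mul_Eig eigenproj_in_Eig)
  also have "\<dots> = mul (\<Sum>i<m. extension (eigenproj i x)) (\<Sum>j<m. eigenproj j y)
      + mul (\<Sum>i<m. eigenproj i x) (\<Sum>j<m. extension (eigenproj j y))"
    by (simp only: sum.distrib) (simp only: mul.sum_left, simp only: mul.sum_right)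
  also have "\<dots> = mul (extension x) y + mul x (extension y)"
    by (simp only: sum_eigenproj flip: endo.linear_sum[OF linear_extension])
  finally show ?thesis .
qed

theorem derivation_extends:
  "\<exists>D \<in> derivations sc mul. (\<forall>j<m. D ` Eig j \<subseteq> Eig j) \<and> (\<forall>x \<in> Eig 0. D x = d x)"
proof (intro bexI conjI allI impI ballI)
  show "extension \<in> derivations sc mul"
    unfolding derivations_def using linear_extension extension_mul by blast
  show "extension ` Eig j \<subseteq> Eig j" if "j < m" for j
  proof
    fix y assume "y \<in> extension ` Eig j"
    then obtain x where "x \<in> Eig j" "y = extension x"
      by blast
    then show "y \<in> Eig j"
      using extension_funpow_U[OF that funpow_V_Eig[of x 0 j]] degree_extension_Eig[OF funpow_V_Eig[of x 0 j]]
      by (simp add: funpow_U_V)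
  qed
  show "extension x = d x" if "x \<in> Eig 0" for x
    using extension_funpow_U[OF order_pos that] by (simp add: degree_extension_zero_degree)
qed

end

section \<open>The grading of the tensor product algebra\<close>

locale graded_tensor_algebra =
  fixes scA :: "'k::field \<Rightarrow> 'a::ab_group_add \<Rightarrow> 'a"
    and mulA :: "'a \<Rightarrow> 'a \<Rightarrow> 'a"
    and scS :: "'k \<Rightarrow> 's::comm_ring_1 \<Rightarrow> 's"
    and scT :: "'k \<Rightarrow> 't::ab_group_add \<Rightarrow> 't"
    and mulT :: "'t \<Rightarrow> 't \<Rightarrow> 't"
    and tens :: "'a \<Rightarrow> 's \<Rightarrow> 't"
    and \<sigma>1 :: "'a \<Rightarrow> 'a" and \<sigma>2 :: "'s \<Rightarrow> 's" and \<omega> :: 'k and m :: nat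
  assumes vector_space_A: "vector_space scA"
    and S_algebra: "comm_unital_k_algebra scS"
    and tensor_algebra: "is_tensor_algebra scA mulA scS scT mulT tens"
    and \<sigma>1_aut: "alg_aut scA mulA \<sigma>1" and \<sigma>1_order: "\<sigma>1 ^^ m = id"
    and \<sigma>2_aut: "alg_aut scS (*) \<sigma>2" and \<sigma>2_order: "\<sigma>2 ^^ m = id"
    and order_nonzero: "of_nat m \<noteq> (0::'k)"
    and root: "\<omega> ^ m = 1"
    and primitive: "\<forall>j. 0 < j \<and> j < m \<longrightarrow> \<omega> ^ j \<noteq> 1"
begin

lemma linear_\<sigma>1: "Vector_Spaces.linear scA scA \<sigma>1"
  and \<sigma>1_mul: "\<sigma>1 (mulA a b) = mulA (\<sigma>1 a) (\<sigma>1 b)"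
  using \<sigma>1_aut by (simp_all add: alg_aut_def)

lemma linear_\<sigma>2: "Vector_Spaces.linear scS scS \<sigma>2"
  and \<sigma>2_mult: "\<sigma>2 (s * t) = \<sigma>2 s * \<sigma>2 t"
  using \<sigma>2_aut by (simp_all add: alg_aut_def)

lemma vector_space_S: "vector_space scS"
  and scale_mult_S: "scS c (s * t) = scS c s * t"
  using S_algebra by (simp_all add: comm_unital_k_algebra_def)

lemma mult_scale_S: "s * scS c t = scS c (s * t)"
  by (metis scale_mult_S mult.commute)

lemma tens_mul: "mulT (tens a s) (tens b t) = tens (mulA a b) (s * t)"
  using tensor_algebra by (simp add: is_tensor_algebra_def)

sublocale tensor_product scA scS scT tens
  using tensor_algebra vector_space_A vector_space_S
  by (intro tensor_product.intro) (simp_all add: is_tensor_algebra_def)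

sublocale mulT: bilinear_map scT scT scT mulT
  using tensor_algebra T.vector_space_axioms unfolding is_tensor_algebra_def k_algebra_def
  by (intro bilinear_map.intro) simp_all

sublocale A: cyclic_operator scA \<sigma>1 \<omega> m
  unfolding cyclic_operator_def cyclic_operator_axioms_def
  using vector_space_A linear_\<sigma>1 \<sigma>1_order order_nonzero root primitive by blast

sublocale S: cyclic_operator scS \<sigma>2 \<omega> m
  unfolding cyclic_operator_def cyclic_operator_axioms_def
  using vector_space_S linear_\<sigma>2 \<sigma>2_order order_nonzero root primitive by blast

definition \<sigma>T :: "'t \<Rightarrow> 't" where
  "\<sigma>T = tensor_lift scT (\<lambda>a s. tens (\<sigma>1 a) (\<sigma>2 s))"

lemma bilinear_\<sigma>_tens: "bilinear_map scA scS scT (\<lambda>a s. tens (\<sigma>1 a) (\<sigma>2 s))"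
  by (intro bilinear_map.intro)
    (simp_all add: vector_space_A vector_space_S T.vector_space_axioms tensor.add_left
      tensor.add_right tensor.scale_left tensor.scale_right
      A.endo.linear_add[OF linear_\<sigma>1] A.endo.linear_scale[OF linear_\<sigma>1]
      S.endo.linear_add[OF linear_\<sigma>2] S.endo.linear_scale[OF linear_\<sigma>2])

lemma linear_\<sigma>T: "Vector_Spaces.linear scT scT \<sigma>T"
  and \<sigma>T_tens: "\<sigma>T (tens a s) = tens (\<sigma>1 a) (\<sigma>2 s)"
  unfolding \<sigma>T_def
  by (rule linear_tensor_lift[OF bilinear_\<sigma>_tens], rule tensor_lift_tens[OF bilinear_\<sigma>_tens])

lemma bilinear_map_linear_comp:
  assumes "Vector_Spaces.linear scT scT f" "Vector_Spaces.linear scT scT g" "Vector_Spaces.linear scT scT h"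
  shows "bilinear_map scT scT scT (\<lambda>x y. h (mulT (f x) (g y)))"
  using assms
  by (intro bilinear_map.intro)
    (simp_all add: T.vector_space_axioms endo.linear_add endo.linear_scale mulT.add_left
      mulT.add_right mulT.scale_left mulT.scale_right)

lemma \<sigma>T_mul: "\<sigma>T (mulT x y) = mulT (\<sigma>T x) (\<sigma>T y)"
proof -
  have "\<sigma>T (mulT (id x) (id y)) = id (mulT (\<sigma>T x) (\<sigma>T y))"
    by (rule bilinear_eq_on_tensors[OF bilinear_map_linear_comp[OF T.linear_id T.linear_id linear_\<sigma>T]
          bilinear_map_linear_comp[OF linear_\<sigma>T linear_\<sigma>T T.linear_id]])
      (simp add: tens_mul \<sigma>T_tens \<sigma>1_mul \<sigma>2_mult)
  then show ?thesis
    by simp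
qed

lemma \<sigma>T_order: "\<sigma>T ^^ m = id"
proof -
  have funpow_tens: "(\<sigma>T ^^ k) (tens a s) = tens ((\<sigma>1 ^^ k) a) ((\<sigma>2 ^^ k) s)" for k a s
    by (induction k) (simp_all add: \<sigma>T_tens)
  have "(\<sigma>T ^^ m) x = id x" for x
    by (rule linear_eq_on_tensors[OF T.linear_funpow[OF linear_\<sigma>T] T.linear_id])
      (simp add: funpow_tens \<sigma>1_order \<sigma>2_order)
  then show ?thesis
    by blast
qed

sublocale graded: cyclic_algebra scT \<sigma>T \<omega> m mulT
  using tensor_algebra T.vector_space_axioms linear_\<sigma>T \<sigma>T_order order_nonzero root primitive \<sigma>T_mul
  unfolding cyclic_algebra_def cyclic_algebra_axioms_def cyclic_operator_def
    cyclic_operator_axioms_def is_tensor_algebra_def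
  by blast

abbreviation TC :: "nat \<Rightarrow> 't set" where
  "TC j \<equiv> tensor_comp scA \<sigma>1 scS \<sigma>2 scT tens \<omega> m j"

lemma tens_Eig:
  assumes "a \<in> A.Eig p" "s \<in> S.Eig q"
  shows "tens a s \<in> graded.Eig (p + q)"
proof -
  have "\<sigma>T (tens a s) = scT (\<omega> ^ p) (scT (\<omega> ^ q) (tens a s))"
    using assms by (simp add: eigcomp_def \<sigma>T_tens tensor.scale_left tensor.scale_right)
  then show ?thesis
    by (simp add: eigcomp_def power_add)
qed

lemma tensor_comp_subset_Eig: "TC j \<subseteq> graded.Eig j"
  unfolding tensor_comp_def
proof (intro T.span_minimal graded.subspace_Eig subsetI, elim CollectE exE conjE)
  fix x a s i
  assume "x = tens a s" "i < m" "a \<in> A.Eig ((j + m - i) mod m)" "s \<in> S.Eig i"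
  have "((j + m - i) mod m + i) mod m = (j + m - i + i) mod m"
    by (simp add: mod_add_left_eq)
  also have "j + m - i + i = j + m"
    using \<open>i < m\<close> by simp
  finally have "graded.Eig ((j + m - i) mod m + i) = graded.Eig j"
    by (metis graded.Eig_mod mod_add_self2)
  then show "x \<in> graded.Eig j"
    using tens_Eig \<open>x = tens a s\<close> \<open>a \<in> A.Eig ((j + m - i) mod m)\<close> \<open>s \<in> S.Eig i\<close> by blast
qed

lemma tens_in_TC:
  assumes "p < m" "q < m" "a \<in> A.Eig p" "s \<in> S.Eig q"
  shows "tens a s \<in> TC ((p + q) mod m)"
proof -
  have "((p + q) mod m + m - q) mod m = p"
    using assms(1,2) by (cases "p + q < m") (simp_all add: mod_if)
  then have "a \<in> A.Eig (((p + q) mod m + m - q) mod m)"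
    using assms(3) by simp
  then show ?thesis
    unfolding tensor_comp_def using assms(2,4) by (intro T.span_base) blast
qed

lemma subspace_TC: "T.subspace (TC j)"
  by (simp add: tensor_comp_def)

lemma eigenproj_tens_in_TC:
  assumes "n < m"
  shows "graded.eigenproj n (tens a s) \<in> TC n"
proof -
  have homogeneous: "graded.eigenproj n (tens (A.eigenproj p a) (S.eigenproj q s)) \<in> TC n"
    if "p < m" "q < m" for p q
    using graded.eigenproj_Eig[OF tens_Eig[OF A.eigenproj_in_Eig S.eigenproj_in_Eig] assms]
      tens_in_TC[OF that A.eigenproj_in_Eig S.eigenproj_in_Eig] T.subspace_0[OF subspace_TC]
    by (cases "(p + q) mod m = n") simp_all
  have "tens a s = tens (\<Sum>p<m. A.eigenproj p a) (\<Sum>q<m. S.eigenproj q s)"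
    by (simp only: A.sum_eigenproj S.sum_eigenproj)
  also have "\<dots> = (\<Sum>p<m. \<Sum>q<m. tens (A.eigenproj p a) (S.eigenproj q s))"
    by (simp only: tensor.sum_left) (simp only: tensor.sum_right)
  finally have "graded.eigenproj n (tens a s)
      = (\<Sum>p<m. \<Sum>q<m. graded.eigenproj n (tens (A.eigenproj p a) (S.eigenproj q s)))"
    by (simp add: endo.linear_sum[OF graded.linear_eigenproj])
  also have "\<dots> \<in> TC n"
    using homogeneous by (auto intro!: T.subspace_sum subspace_TC)
  finally show ?thesis .
qed

lemma eigenproj_in_TC:
  assumes "n < m"
  shows "graded.eigenproj n x \<in> TC n"
proof -
  have "x \<in> T.span {tens a s | a s. True}"
    using span_tensors by simp
  then show ?thesis
  proof (induction rule: T.span_induct_alt)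
    case base
    show ?case
      by (simp add: endo.linear_0[OF graded.linear_eigenproj] T.subspace_0[OF subspace_TC])
  next
    case (step c x y)
    then show ?case
      using eigenproj_tens_in_TC[OF assms]
      by (auto simp: endo.linear_add[OF graded.linear_eigenproj]
          endo.linear_scale[OF graded.linear_eigenproj]
          intro!: T.subspace_add[OF subspace_TC] T.subspace_scale[OF subspace_TC])
  qed
qed

lemma Eig_eq_TC:
  assumes "j < m"
  shows "graded.Eig j = TC j"
proof
  show "TC j \<subseteq> graded.Eig j"
    by (rule tensor_comp_subset_Eig)
  show "graded.Eig j \<subseteq> TC j"
  proof
    fix x assume "x \<in> graded.Eig j"
    then have "graded.eigenproj j x = x"
      using graded.eigenproj_Eig[of x j j] assms by simp
    then show "x \<in> TC j"
      using eigenproj_in_TC[OF assms, of x] by simp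
  qed
qed

definition mult_op :: "'s \<Rightarrow> 't \<Rightarrow> 't" where
  "mult_op s = tensor_lift scT (\<lambda>a t. tens a (s * t))"

lemma bilinear_tens_mult: "bilinear_map scA scS scT (\<lambda>a t. tens a (s * t))"
  by unfold_locales
    (simp_all add: vector_space_A vector_space_S T.vector_space_axioms tensor.add_left
      tensor.add_right tensor.scale_left tensor.scale_right distrib_left mult_scale_S)

lemma linear_mult_op: "Vector_Spaces.linear scT scT (mult_op s)"
  and mult_op_tens: "mult_op s (tens a t) = tens a (s * t)"
  unfolding mult_op_def
  by (rule linear_tensor_lift[OF bilinear_tens_mult], rule tensor_lift_tens[OF bilinear_tens_mult])

lemma mult_op_centroid: "mult_op s \<in> centroid scT mulT"
proof -
  have "mult_op s (mulT (id x) (id y)) = id (mulT (mult_op s x) (id y))" for x y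
    by (rule bilinear_eq_on_tensors[OF bilinear_map_linear_comp[OF T.linear_id T.linear_id linear_mult_op]
          bilinear_map_linear_comp[OF linear_mult_op T.linear_id T.linear_id]])
      (simp add: tens_mul mult_op_tens ac_simps)
  moreover have "mult_op s (mulT (id x) (id y)) = id (mulT (id x) (mult_op s y))" for x y
    by (rule bilinear_eq_on_tensors[OF bilinear_map_linear_comp[OF T.linear_id T.linear_id linear_mult_op]
          bilinear_map_linear_comp[OF T.linear_id linear_mult_op T.linear_id]])
      (simp add: tens_mul mult_op_tens ac_simps)
  ultimately show ?thesis
    using linear_mult_op unfolding centroid_def id_def by blast
qed

lemma mult_op_mult: "mult_op s (mult_op t x) = mult_op (s * t) x"
proof -
  have "(mult_op s \<circ> mult_op t) x = mult_op (s * t) x"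
    by (rule linear_eq_on_tensors[OF Vector_Spaces.linear_compose[OF linear_mult_op linear_mult_op]
          linear_mult_op])
      (simp add: mult_op_tens mult.assoc)
  then show ?thesis
    by simp
qed

lemma mult_op_1: "mult_op 1 x = x"
  using linear_eq_on_tensors[OF linear_mult_op T.linear_id] by (simp add: mult_op_tens)

lemma mult_op_scale: "mult_op (scS c s) x = scT c (mult_op s x)"
  by (rule linear_eq_on_tensors[OF linear_mult_op endo.linear_compose_scale_right[OF linear_mult_op]])
    (simp add: mult_op_tens tensor.scale_right flip: scale_mult_S)

lemma \<sigma>T_mult_op: "\<sigma>T (mult_op s x) = mult_op (\<sigma>2 s) (\<sigma>T x)"
proof -
  have "(\<sigma>T \<circ> mult_op s) x = (mult_op (\<sigma>2 s) \<circ> \<sigma>T) x"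
    by (rule linear_eq_on_tensors[OF Vector_Spaces.linear_compose[OF linear_mult_op linear_\<sigma>T]
          Vector_Spaces.linear_compose[OF linear_\<sigma>T linear_mult_op]])
      (simp add: mult_op_tens \<sigma>T_tens \<sigma>2_mult)
  then show ?thesis
    by simp
qed

theorem derivation_extends_from_fixed_points:
  assumes u: "u \<in> S.Eig 1" and uv: "u * v = 1"
    and d: "d \<in> derivations_on scT mulT (TC 0)"
  shows "\<exists>D \<in> derivations scT mulT. (\<forall>j<m. D ` TC j \<subseteq> TC j) \<and> (\<forall>x \<in> TC 0. D x = d x)"
proof -
  interpret derivation_extension scT \<sigma>T \<omega> m mulT "mult_op u" "mult_op v" d
  proof (intro derivation_extension.intro graded.cyclic_algebra_axioms derivation_extension_axioms.intro)
    show "mult_op u \<in> centroid scT mulT"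
      by (rule mult_op_centroid)
    show "mult_op u (mult_op v x) = x" "mult_op v (mult_op u x) = x" for x
      using uv by (simp_all add: mult_op_mult mult_op_1 mult.commute)
    show "\<sigma>T (mult_op u x) = scT \<omega> (mult_op u (\<sigma>T x))" for x
      using u by (simp add: eigcomp_def \<sigma>T_mult_op mult_op_scale)
    show "d \<in> derivations_on scT mulT (graded.Eig 0)"
      using d Eig_eq_TC[of 0] graded.order_pos by simp
  qed
  show ?thesis
    using derivation_extends Eig_eq_TC graded.order_pos by simp
qed

end

theorem lemma4p8:
  fixes scA :: "'k::field \<Rightarrow> 'a::ab_group_add \<Rightarrow> 'a"
    and mulA :: "'a \<Rightarrow> 'a \<Rightarrow> 'a"
    and scS :: "'k \<Rightarrow> 's::comm_ring_1 \<Rightarrow> 's"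
    and scT :: "'k \<Rightarrow> 't::ab_group_add \<Rightarrow> 't"
    and mulT :: "'t \<Rightarrow> 't \<Rightarrow> 't"
    and tens :: "'a \<Rightarrow> 's \<Rightarrow> 't"
    and scC :: "'k \<Rightarrow> 'c::ab_group_add \<Rightarrow> 'c"
    and tensC :: "('a \<Rightarrow> 'a) \<Rightarrow> 's \<Rightarrow> 'c"
    and \<sigma>1 :: "'a \<Rightarrow> 'a" and \<sigma>2 :: "'s \<Rightarrow> 's"
    and \<omega> :: 'k and m :: nat and u :: 's
  assumes m_pos: "m > 0"
    and all_roots: "card {x::'k. x ^ m = 1} = m"
    and char_ndvd: "of_nat m \<noteq> (0::'k)"
    and omega_prim: "\<omega> ^ m = 1" "\<forall>j. 0 < j \<and> j < m \<longrightarrow> \<omega> ^ j \<noteq> 1"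
    and A_alg: "k_algebra scA mulA"
    and A_perfect: "perfect scA mulA"
    and S_alg: "comm_unital_k_algebra scS"
    and T_tensor: "is_tensor_algebra scA mulA scS scT mulT tens"
    and \<sigma>1_aut: "alg_aut scA mulA \<sigma>1" and \<sigma>1_order: "\<sigma>1 ^^ m = id"
    and \<sigma>2_aut: "alg_aut scS (*) \<sigma>2" and \<sigma>2_order: "\<sigma>2 ^^ m = id"
    and u_deg1: "u \<in> eigcomp scS \<sigma>2 \<omega> 1" and u_unit: "\<exists>v. u * v = 1"
    and C_tensor: "is_tensor (\<lambda>c g x. scA c (g x)) (centroid scA mulA) scS scC tensC"
    and psi_iso: "\<exists>\<psi>. Vector_Spaces.linear scC (\<lambda>c F y. scT c (F y)) \<psi> \<and> inj \<psi> \<and>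
                     \<psi> ` UNIV = centroid scT mulT \<and>
                     (\<forall>\<gamma>\<in>centroid scA mulA. \<forall>s a t.
                         \<psi> (tensC \<gamma> s) (tens a t) = tens (\<gamma> a) (s * t))"
  shows "\<forall>d \<in> derivations_on scT mulT (tensor_comp scA \<sigma>1 scS \<sigma>2 scT tens \<omega> m 0).
           \<exists>D \<in> derivations scT mulT.
             (\<forall>j<m. D ` tensor_comp scA \<sigma>1 scS \<sigma>2 scT tens \<omega> m j
                      \<subseteq> tensor_comp scA \<sigma>1 scS \<sigma>2 scT tens \<omega> m j) \<and>
             (\<forall>x \<in> tensor_comp scA \<sigma>1 scS \<sigma>2 scT tens \<omega> m 0. D x = d x)"
proof -
  (* Multiplication by u is obtained directly from the tensor structure (mult_op). *)
  interpret graded_tensor_algebra scA mulA scS scT mulT tens \<sigma>1 \<sigma>2 \<omega> m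
    using A_alg S_alg T_tensor \<sigma>1_aut \<sigma>1_order \<sigma>2_aut \<sigma>2_order char_ndvd omega_prim
    by (intro graded_tensor_algebra.intro) (simp_all add: k_algebra_def)
  obtain v where "u * v = 1"
    using u_unit by blast
  then show ?thesis
    using derivation_extends_from_fixed_points u_deg1 by blast
qed

end
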